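(* Let $\mathcal{P}$ be a uniformly induced Lubell-bounded poset other than $\mathcal{C}_1$. Then $\mathrm{RR}(\vee_2:\mathcal{P})=2e(\mathcal{P})+1$.
   Context: $\mathcal{B}_n$ denotes the Boolean lattice of all subsets of $[n]$ ordered by inclusion; its $k$-th level is $\binom{[n]}{k}$, the family of $k$-element subsets. An induced copy of a poset $\mathcal{P}$ in a poset $\mathcal{Q}$ is the image of an injection $f:\mathcal{P}\to\mathcal{Q}$ with $f(X)\le f(Y)$ iff $X\le Y$; a family is induced $\mathcal{P}$-free if it contains no induced copy of $\mathcal{P}$. $\mathcal{C}_1$ is the one-element poset. $\vee_2$ is the poset on $X_0,X_1,X_2$ with $X_0<X_1$, $X_0<X_2$, $X_1,X_2$ incomparable. $e(\mathcal{P})$ is the largest integer $m$ such that for every $n$, the union of any $m$ consecutive levels of $\mathcal{B}_n$ is induced $\mathcal{P}$-free. For $\mathcal{F}\subseteq\mathcal{B}_n$, $\mathrm{lu}_n(\mathcal{F})=\sum_{F\in\mathcal{F}}\binom{n}{|F|}^{-1}$, and $\mathrm{Lu}_n(\mathcal{P})$ is the maximum of $\mathrm{lu}_n(\mathcal{F})$ over induced $\mathcal{P}$-free $\mathcal{F}\subseteq\mathcal{B}_n$. $\mathcal{P}$ is uniformly induced Lubell-bounded if $e(\mathcal{P})\ge \mathrm{Lu}_n(\mathcal{P})$ for all positive integers $n$. Monochromatic: all sets share a color; rainbow: pairwise distinct colors. $\mathrm{RR}(\mathcal{Q}:\mathcal{P})$ is the smallest $n$ such that every coloring (with any number of colors)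 of the sets of $\mathcal{B}_n$ contains a rainbow induced copy of $\mathcal{Q}$ or a monochromatic induced copy of $\mathcal{P}$. *)

theory Defs
  imports Complex_Main
begin

definition induced_emb :: "'a set \<Rightarrow> ('a \<Rightarrow> 'a \<Rightarrow> bool) \<Rightarrow> nat set set \<Rightarrow> ('a \<Rightarrow> nat set) \<Rightarrow> bool" where
  "induced_emb A le F f \<longleftrightarrow> inj_on f A \<and> f ` A \<subseteq> F \<and>
     (\<forall>x\<in>A. \<forall>y\<in>A. (f x \<subseteq> f y \<longleftrightarrow> le x y))"

definition induced_free :: "'a set \<Rightarrow> ('a \<Rightarrow> 'a \<Rightarrow> bool) \<Rightarrow> nat set set \<Rightarrow> bool" where
  "induced_free A le F \<longleftrightarrow> \<not> (\<exists>f. induced_emb A le F f)"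

definition boolean_lattice :: "nat \<Rightarrow> nat set set" where
  "boolean_lattice n = Pow {1..n}"

definition consec_levels :: "nat \<Rightarrow> nat \<Rightarrow> nat \<Rightarrow> nat set set" where
  "consec_levels n k m = {S. S \<subseteq> {1..n} \<and> k \<le> card S \<and> card S < k + m}"

definition e_num :: "'a set \<Rightarrow> ('a \<Rightarrow> 'a \<Rightarrow> bool) \<Rightarrow> nat" where
  "e_num A le = (GREATEST m. \<forall>n k. induced_free A le (consec_levels n k m))"

definition lubell :: "nat \<Rightarrow> nat set set \<Rightarrow> real" where
  "lubell n F = (\<Sum>S\<in>F. 1 / real (n choose card S))"

definition Lubell_max :: "nat \<Rightarrow> 'a set \<Rightarrow> ('a \<Rightarrow> 'a \<Rightarrow> bool) \<Rightarrow> real" where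
  "Lubell_max n A le = Max {lubell n F | F. F \<subseteq> boolean_lattice n \<and> induced_free A le F}"

definition uniformly_induced_Lubell_bounded :: "'a set \<Rightarrow> ('a \<Rightarrow> 'a \<Rightarrow> bool) \<Rightarrow> bool" where
  "uniformly_induced_Lubell_bounded A le \<longleftrightarrow> (\<forall>n>0. real (e_num A le) \<ge> Lubell_max n A le)"

definition V2_carrier :: "nat set" where "V2_carrier = {0, 1, 2}"
definition V2_le :: "nat \<Rightarrow> nat \<Rightarrow> bool" where "V2_le x y \<longleftrightarrow> x = y \<or> x = 0"

text \<open>Rainbow-Ramsey number RR(Q:P); colourings use colours in nat, which
  covers any number of colours since B_n is finite.\<close>
definition RR :: "'b set \<Rightarrow> ('b \<Rightarrow> 'b \<Rightarrow> bool) \<Rightarrow> 'a set \<Rightarrow> ('a \<Rightarrow> 'a \<Rightarrow> bool) \<Rightarrow> nat" where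
  "RR Q leQ P leP = (LEAST n. \<forall>c :: nat set \<Rightarrow> nat.
      (\<exists>f. induced_emb Q leQ (boolean_lattice n) f \<and> inj_on c (f ` Q)) \<or>
      (\<exists>f col. induced_emb P leP (boolean_lattice n) f \<and> (\<forall>x\<in>P. c (f x) = col)))"

end

(* Lower bound: for m <= 2 e(P) colour the sets of B_m of size < e with one colour, those of
   size in [e, 2e) with a second and the remaining ones with a third.  A copy of V_2 never uses
   the full set [m], so it sees only the first two colours; a monochromatic copy of P would lie
   in e consecutive levels, or collapse onto [m].

   Upper bound: let n = 2 e(P) + 1 and let c colour B_n without a rainbow V_2.  Then two
   incomparable sets whose colours differ from c({}) get the same colour, so the family N of
   proper nonempty sets not coloured like {} is either monochromatic, or it admits a pivot:
   a set S, nonempty and proper, comparable with every member of N.  (S is the union of the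
   members of N smaller than the smallest member whose colour differs from that of a smallest
   member.)  A pivot bounds the Lubell mass of N by |S|/(n+1-|S|) + (n-|S|)/(|S|+1) < (n+1)/2.
   As the levels 0, ..., n-1 have Lubell mass n, some colour class has mass > e(P) >= Lu_n(P)
   and therefore contains an induced copy of P. *)

theory Submission
  imports Defs
begin

lemma lubell_nonneg: "0 \<le> lubell n F"
  unfolding lubell_def by (rule sum_nonneg) simp

lemma lubell_mono: "F \<subseteq> G \<Longrightarrow> finite G \<Longrightarrow> lubell n F \<le> lubell n G"
  unfolding lubell_def by (rule sum_mono2) auto

lemma lubell_Un_le:
  assumes "finite F" "finite G"
  shows "lubell n (F \<union> G) \<le> lubell n F + lubell n G"
proof -
  have "lubell n (F \<union> G) = lubell n F + lubell n G - lubell n (F \<inter> G)"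
    unfolding lubell_def using sum_Un[OF assms] by simp
  then show ?thesis
    using lubell_nonneg[of n "F \<inter> G"] by simp
qed

lemma lubell_insert_empty: "finite F \<Longrightarrow> {} \<notin> F \<Longrightarrow> lubell n (insert {} F) = 1 + lubell n F"
  unfolding lubell_def by simp

lemma lubell_eq_sum_levels:
  assumes "finite F" "finite T" "card ` F \<subseteq> T"
  shows "lubell n F = (\<Sum>k\<in>T. real (card {X\<in>F. card X = k}) / real (n choose k))"
proof -
  have "lubell n F = (\<Sum>k\<in>T. \<Sum>X\<in>{X\<in>F. card X = k}. 1 / real (n choose card X))"
    unfolding lubell_def using sum.group[OF assms, of "\<lambda>X. 1 / real (n choose card X)"] by simp
  also have "\<dots> = (\<Sum>k\<in>T. real (card {X\<in>F. card X = k}) / real (n choose k))"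
    by (rule sum.cong) auto
  finally show ?thesis .
qed

lemma lubell_image_compl:
  assumes "F \<subseteq> Pow {1..n}"
  shows "lubell n ((\<lambda>X. {1..n} - X) ` F) = lubell n F"
proof -
  have "inj_on (\<lambda>X. {1..n} - X) F"
    using assms by (intro inj_onI) blast
  moreover have "n choose card ({1..n} - X) = n choose card X" if "X \<in> F" for X
  proof -
    have "X \<subseteq> {1..n}" using that assms by blast
    then have "card ({1..n} - X) = n - card X" and "card X \<le> n"
      using card_mono[of "{1..n}" X] by (simp_all add: card_Diff_subset finite_subset)
    then show ?thesis by (simp add: binomial_symmetric[symmetric])
  qed
  ultimately show ?thesis
    unfolding lubell_def by (simp add: sum.reindex)
qed

lemma lubell_below_top: "lubell n {X. X \<subseteq> {1..n} \<and> card X < n} = real n"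
proof -
  let ?F = "{X. X \<subseteq> {1..n} \<and> card X < n}"
  have "lubell n ?F = (\<Sum>k<n. real (card {X\<in>?F. card X = k}) / real (n choose k))"
    by (rule lubell_eq_sum_levels) (auto intro: finite_subset[of _ "Pow {1..n}"])
  also have "\<dots> = (\<Sum>k<n. 1)"
  proof (rule sum.cong)
    fix k assume "k \<in> {..<n}"
    then have "{X\<in>?F. card X = k} = {X. X \<subseteq> {1..n} \<and> card X = k}" and "0 < n choose k"
      by auto
    then show "real (card {X\<in>?F. card X = k}) / real (n choose k) = 1"
      using n_subsets[of "{1..n}" k] by simp
  qed simp
  finally show ?thesis by simp
qed

lemma sum_choose_div_choose:
  assumes "s \<le> n"
  shows "(\<Sum>k\<le>s. real (s choose k) / real (n choose k)) = real (n + 1) / real (n + 1 - s)"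
proof -
  have ns: "0 < real (n choose s)" using assms by simp
  have term_eq: "real (s choose k) / real (n choose k) = real ((n - k) choose (s - k)) / real (n choose s)"
    if "k \<le> s" for k
  proof -
    have "(n choose s) * (s choose k) = (n choose k) * ((n - k) choose (s - k))"
      using choose_mult[of k s n] that assms by simp
    then have "real (n choose s) * real (s choose k) = real (n choose k) * real ((n - k) choose (s - k))"
      by (metis of_nat_mult)
    moreover have "0 < real (n choose k)" using that assms by simp
    ultimately show ?thesis using ns by (simp add: field_simps)
  qed
  have "(\<Sum>k\<le>s. real (s choose k) / real (n choose k))
      = (\<Sum>k\<le>s. real ((n - k) choose (s - k)) / real (n choose s))"
    using term_eq by (intro sum.cong) auto
  also have "\<dots> = real (\<Sum>k\<le>s. (n - k) choose (s - k)) / real (n choose s)"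
    by (simp add: sum_divide_distrib)
  also have "\<dots> = real (Suc n choose s) / real (n choose s)"
    using sum_choose_diagonal[OF assms] by simp
  also have "\<dots> = real (n + 1) / real (n + 1 - s)"
  proof -
    have "(Suc n - s) * (Suc n choose s) = Suc n * (n choose s)"
      using binomial_absorb_comp[of "Suc n" s] by simp
    then have "real (Suc n - s) * real (Suc n choose s) = real (Suc n) * real (n choose s)"
      by (metis of_nat_mult)
    moreover have "0 < real (Suc n - s)" using assms by simp
    ultimately show ?thesis using ns by (simp add: field_simps)
  qed
  finally show ?thesis .
qed

lemma lubell_Pow:
  assumes "finite S" "card S \<le> n"
  shows "lubell n (Pow S) = real (n + 1) / real (n + 1 - card S)"
proof -
  have "lubell n (Pow S) = (\<Sum>k\<le>card S. real (card {X\<in>Pow S. card X = k}) / real (n choose k))"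
    by (rule lubell_eq_sum_levels) (use assms in \<open>auto intro: card_mono\<close>)
  also have "\<dots> = (\<Sum>k\<le>card S. real (card S choose k) / real (n choose k))"
    using n_subsets[OF assms(1)] by (simp add: Pow_def)
  finally show ?thesis
    using sum_choose_div_choose[OF assms(2)] by simp
qed

lemma lubell_nonempty_subsets:
  assumes "finite S" "card S \<le> n"
  shows "lubell n {X. X \<subseteq> S \<and> X \<noteq> {}} = real (card S) / real (n + 1 - card S)"
proof -
  have "Pow S = insert {} {X. X \<subseteq> S \<and> X \<noteq> {}}" by auto
  then have "lubell n (Pow S) = 1 + lubell n {X. X \<subseteq> S \<and> X \<noteq> {}}"
    using assms(1) by (simp add: lubell_insert_empty)
  moreover have "0 < real (n + 1 - card S)" and "real (n + 1 - card S) = real n + 1 - real (card S)"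
    using assms(2) by auto
  ultimately show ?thesis
    using lubell_Pow[OF assms] by (simp add: field_simps)
qed

lemma lubell_proper_supersets:
  assumes "S \<subseteq> {1..n}"
  shows "lubell n {X. S \<subseteq> X \<and> X \<subset> {1..n}} = real (n - card S) / real (card S + 1)"
proof -
  let ?U = "{1..n}"
  have "{X. S \<subseteq> X \<and> X \<subset> ?U} = (\<lambda>Y. ?U - Y) ` {Y. Y \<subseteq> ?U - S \<and> Y \<noteq> {}}"
  proof (intro equalityI subsetI)
    fix X assume "X \<in> {X. S \<subseteq> X \<and> X \<subset> ?U}"
    then show "X \<in> (\<lambda>Y. ?U - Y) ` {Y. Y \<subseteq> ?U - S \<and> Y \<noteq> {}}"
      by (intro image_eqI[of _ _ "?U - X"]) auto
  qed (use assms in auto)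
  then have "lubell n {X. S \<subseteq> X \<and> X \<subset> ?U} = lubell n {Y. Y \<subseteq> ?U - S \<and> Y \<noteq> {}}"
    using lubell_image_compl[of "{Y. Y \<subseteq> ?U - S \<and> Y \<noteq> {}}" n] by (simp only:) blast
  also have "\<dots> = real (card (?U - S)) / real (n + 1 - card (?U - S))"
    by (rule lubell_nonempty_subsets) (use card_mono[of ?U "?U - S"] in auto)
  also have "card (?U - S) = n - card S"
    using assms by (simp add: card_Diff_subset finite_subset)
  also have "n + 1 - (n - card S) = card S + 1"
    using card_mono[OF _ assms] by simp
  finally show ?thesis .
qed

lemma div_Suc_add_div_Suc_less:
  fixes a b :: real
  assumes "1 \<le> a" "1 \<le> b"
  shows "a / (b + 1) + b / (a + 1) < (a + b + 1) / 2"
proof -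
  have "(a + b + 1) * (a + 1) * (b + 1) - 2 * (a * (a + 1) + b * (b + 1))
      = a * a * (b - 1) + b * b * (a - 1) + 3 * a * b + 1"
    by (simp add: algebra_simps)
  moreover have "0 \<le> a * a * (b - 1)" "0 \<le> b * b * (a - 1)" "0 < a * b"
    using assms by simp_all
  ultimately have "2 * (a * (a + 1) + b * (b + 1)) < (a + b + 1) * (a + 1) * (b + 1)"
    by linarith
  then have "(a * (a + 1) + b * (b + 1)) / ((b + 1) * (a + 1)) < (a + b + 1) / 2"
    using assms by (simp add: divide_simps) (simp add: algebra_simps)
  moreover have "a / (b + 1) + b / (a + 1) = (a * (a + 1) + b * (b + 1)) / ((b + 1) * (a + 1))"
    using assms by (simp add: field_simps)
  ultimately show ?thesis by simp
qed

lemma lubell_subsets_Un_supersets_less: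
  assumes "S \<noteq> {}" "S \<subset> {1..n}"
  shows "lubell n ({X. X \<subseteq> S \<and> X \<noteq> {}} \<union> {X. S \<subseteq> X \<and> X \<subset> {1..n}}) < real (n + 1) / 2"
proof -
  have fin: "finite S" using assms(2) finite_subset by blast
  have s: "1 \<le> card S" "card S < n"
    using assms fin psubset_card_mono[OF _ assms(2)] by (auto simp: Suc_le_eq card_gt_0_iff)
  have "lubell n ({X. X \<subseteq> S \<and> X \<noteq> {}} \<union> {X. S \<subseteq> X \<and> X \<subset> {1..n}})
      \<le> lubell n {X. X \<subseteq> S \<and> X \<noteq> {}} + lubell n {X. S \<subseteq> X \<and> X \<subset> {1..n}}"
  proof (rule lubell_Un_le)
    show "finite {X. X \<subseteq> S \<and> X \<noteq> {}}" using fin by simp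
    show "finite {X. S \<subseteq> X \<and> X \<subset> {1..n}}"
      by (rule finite_subset[of _ "Pow {1..n}"]) auto
  qed
  also have "\<dots> = real (card S) / real (n + 1 - card S) + real (n - card S) / real (card S + 1)"
    using assms(2) by (simp only: lubell_nonempty_subsets[OF fin] lubell_proper_supersets s less_imp_le)
  also have "\<dots> < (real (card S) + real (n - card S) + 1) / 2"
  proof -
    have "real (n + 1 - card S) = real (n - card S) + 1" "real (card S + 1) = real (card S) + 1"
      using s by auto
    moreover have "1 \<le> real (card S)" "1 \<le> real (n - card S)" using s by auto
    ultimately show ?thesis
      using div_Suc_add_div_Suc_less by (simp only:)
  qed
  also have "\<dots> = real (n + 1) / 2" using s by simp
  finally show ?thesis .
qed

lemma comparable_card_less_imp_subset:
  "finite x \<Longrightarrow> x \<subseteq> y \<or> y \<subseteq> x \<Longrightarrow> card x < card y \<Longrightarrow> x \<subseteq> y"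
  by (meson card_mono leD)

lemma comparable_card_eq_imp_eq:
  "finite x \<Longrightarrow> finite y \<Longrightarrow> x \<subseteq> y \<or> y \<subseteq> x \<Longrightarrow> card x = card y \<Longrightarrow> x = y"
  by (metis card_subset_eq)

lemma comparable_colours_split:
  fixes c :: "'b set \<Rightarrow> 'c"
  assumes "finite U" and N: "N \<subseteq> Pow U" "{} \<notin> N" "U \<notin> N"
    and comparable: "\<And>x y. x \<in> N \<Longrightarrow> y \<in> N \<Longrightarrow> c x \<noteq> c y \<Longrightarrow> x \<subseteq> y \<or> y \<subseteq> x"
    and "x1 \<in> N" "y1 \<in> N" "c x1 \<noteq> c y1"
  obtains S where "S \<noteq> {}" "S \<subset> U" "\<And>X. X \<in> N \<Longrightarrow> X \<subseteq> S \<or> S \<subseteq> X"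
proof -
  have fin: "finite X" if "X \<in> N" for X
    using that N(1) \<open>finite U\<close> finite_subset by blast
  have smaller_sub: "x \<subseteq> y" if "x \<in> N" "y \<in> N" "card x < card y" "c x \<noteq> c y" for x y
    using comparable_card_less_imp_subset[OF fin[OF that(1)] comparable[OF that(1,2,4)] that(3)] .
  have same_colour: "c x = c y" if "x \<in> N" "y \<in> N" "card x = card y" for x y
  proof (rule ccontr)
    assume "c x \<noteq> c y"
    with that have "x = y"
      using comparable_card_eq_imp_eq[OF fin fin comparable] by blast
    with \<open>c x \<noteq> c y\<close> show False by simp
  qed
  obtain x0 where x0: "x0 \<in> N" and x0_min: "\<And>y. y \<in> N \<Longrightarrow> card x0 \<le> card y"
    using ex_has_least_nat[of "\<lambda>X. X \<in> N" x1 card] \<open>x1 \<in> N\<close> by blast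
  have "\<exists>z. z \<in> N \<and> c z \<noteq> c x0"
    using \<open>x1 \<in> N\<close> \<open>y1 \<in> N\<close> \<open>c x1 \<noteq> c y1\<close> by metis
  then obtain z0 where z0: "z0 \<in> N" "c z0 \<noteq> c x0"
    and z0_min: "\<And>y. y \<in> N \<Longrightarrow> c y \<noteq> c x0 \<Longrightarrow> card z0 \<le> card y"
    using ex_has_least_nat[of "\<lambda>X. X \<in> N \<and> c X \<noteq> c x0" _ card] by blast
  define L where "L = {X \<in> N. card X < card z0}"
  have L_colour: "c x = c x0" if "x \<in> L" for x
    using z0_min[of x] that by (force simp: L_def)
  have x0_L: "x0 \<in> L"
    using x0_min[OF z0(1)] same_colour[OF x0 z0(1)] z0(2) x0 by (force simp: L_def)
  have L_below_z0: "x \<subseteq> z0" if "x \<in> L" for x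
    using smaller_sub[of x z0] L_colour[OF that] that z0 by (auto simp: L_def)
  have L_below_rest: "x \<subseteq> y" if "x \<in> L" "y \<in> N - L" for x y
  proof (cases "c y = c x0")
    case True
    then have "card z0 < card y"
      using same_colour[of y z0] z0 that(2) by (force simp: L_def)
    then have "z0 \<subseteq> y"
      using smaller_sub[of z0 y] True z0 that(2) by auto
    then show ?thesis using L_below_z0[OF that(1)] by blast
  next
    case False
    then show ?thesis
      using smaller_sub[of x y] L_colour[OF that(1)] that by (auto simp: L_def)
  qed
  show ?thesis
  proof (rule that[of "\<Union>L"])
    have "x0 \<noteq> {}"
      using x0 N(2) by auto
    then show "\<Union>L \<noteq> {}"
      using x0_L by auto
    have "z0 \<subset> U"
      using z0(1) N(1,3) unfolding psubset_eq by auto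
    then show "\<Union>L \<subset> U"
      using L_below_z0 by blast
    show "X \<subseteq> \<Union>L \<or> \<Union>L \<subseteq> X" if "X \<in> N" for X
      using L_below_rest[of _ X] that by (cases "X \<in> L") auto
  qed
qed

lemma lubell_comparable_colours_less:
  fixes c :: "nat set \<Rightarrow> 'c"
  assumes N: "N \<subseteq> Pow {1..n}" "{} \<notin> N" "{1..n} \<notin> N"
    and comparable: "\<And>x y. x \<in> N \<Longrightarrow> y \<in> N \<Longrightarrow> c x \<noteq> c y \<Longrightarrow> x \<subseteq> y \<or> y \<subseteq> x"
    and "x1 \<in> N" "y1 \<in> N" "c x1 \<noteq> c y1"
  shows "lubell n N < real (n + 1) / 2"
proof -
  obtain S where S: "S \<noteq> {}" "S \<subset> {1..n}" and pivot: "\<And>X. X \<in> N \<Longrightarrow> X \<subseteq> S \<or> S \<subseteq> X"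
    using comparable_colours_split[OF finite_atLeastAtMost N comparable assms(5-7)] by blast
  have "N \<subseteq> {X. X \<subseteq> S \<and> X \<noteq> {}} \<union> {X. S \<subseteq> X \<and> X \<subset> {1..n}}"
    using pivot N by auto
  moreover have "finite ({X. X \<subseteq> S \<and> X \<noteq> {}} \<union> {X. S \<subseteq> X \<and> X \<subset> {1..n}})"
    by (rule finite_subset[of _ "Pow {1..n}"]) (use S in auto)
  ultimately have "lubell n N \<le> lubell n ({X. X \<subseteq> S \<and> X \<noteq> {}} \<union> {X. S \<subseteq> X \<and> X \<subset> {1..n}})"
    by (rule lubell_mono)
  also have "\<dots> < real (n + 1) / 2"
    using S by (rule lubell_subsets_Un_supersets_less)
  finally show ?thesis .
qed

lemma no_rainbow_V2_large_colour_class: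
  fixes c :: "nat set \<Rightarrow> 'c"
  assumes no_rainbow: "\<And>x y. x \<subseteq> {1..n} \<Longrightarrow> y \<subseteq> {1..n} \<Longrightarrow> \<not> x \<subseteq> y \<Longrightarrow> \<not> y \<subseteq> x \<Longrightarrow>
      c x = c y \<or> c x = c {} \<or> c y = c {}"
  shows "\<exists>col. real n - 1 < 2 * lubell n {X. X \<subseteq> {1..n} \<and> c X = col}"
proof -
  let ?U = "{1..n}"
  define colour_class where "colour_class col = {X. X \<subseteq> ?U \<and> c X = col}" for col
  define N where "N = {X. X \<subseteq> ?U \<and> X \<noteq> {} \<and> X \<noteq> ?U \<and> c X \<noteq> c {}}"
  have fin_colour_class: "finite (colour_class col)" for col
    unfolding colour_class_def by (rule finite_subset[of _ "Pow ?U"]) auto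
  have fin_N: "finite N"
    unfolding N_def by (rule finite_subset[of _ "Pow ?U"]) auto
  have "{X. X \<subseteq> ?U \<and> card X < n} \<subseteq> colour_class (c {}) \<union> N"
    by (auto simp: colour_class_def N_def)
  then have "real n \<le> lubell n (colour_class (c {}) \<union> N)"
    using lubell_below_top[of n] lubell_mono fin_colour_class fin_N by (metis finite_UnI)
  also have "\<dots> \<le> lubell n (colour_class (c {})) + lubell n N"
    using fin_colour_class fin_N by (rule lubell_Un_le)
  finally have cover: "real n \<le> lubell n (colour_class (c {})) + lubell n N" .
  show ?thesis
  proof (cases "\<exists>x1\<in>N. \<exists>y1\<in>N. c x1 \<noteq> c y1")
    case True
    then obtain x1 y1 where two_colours: "x1 \<in> N" "y1 \<in> N" "c x1 \<noteq> c y1" by blast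
    have comparable: "x \<subseteq> y \<or> y \<subseteq> x" if "x \<in> N" "y \<in> N" "c x \<noteq> c y" for x y
      using no_rainbow[of x y] that by (auto simp: N_def)
    have "N \<subseteq> Pow ?U" "{} \<notin> N" "?U \<notin> N"
      by (auto simp: N_def)
    from lubell_comparable_colours_less[OF this comparable two_colours]
    have "real n - 1 < 2 * lubell n (colour_class (c {}))"
      using cover by simp
    then show ?thesis
      unfolding colour_class_def by blast
  next
    case False
    then have monochromatic: "c x = c y" if "x \<in> N" "y \<in> N" for x y
      using that by blast
    obtain \<beta> where "N \<subseteq> colour_class \<beta>"
    proof (cases "N = {}")
      case False
      then obtain x where x: "x \<in> N" by blast
      have "X \<in> colour_class (c x)" if "X \<in> N" for X
        using that monochromatic[OF that x] by (simp add: colour_class_def N_def)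
      then have "N \<subseteq> colour_class (c x)"
        by blast
      then show thesis
        by (rule that)
    next
      case True
      then show thesis
        using that[of "c {}"] by blast
    qed
    then have "lubell n N \<le> lubell n (colour_class \<beta>)"
      using fin_colour_class by (rule lubell_mono)
    then have "real n - 1 < 2 * lubell n (colour_class (c {})) \<or> real n - 1 < 2 * lubell n (colour_class \<beta>)"
      using cover by linarith
    then show ?thesis
      unfolding colour_class_def by blast
  qed
qed

definition rainbow_mono_arrow ::
    "nat \<Rightarrow> 'b set \<Rightarrow> ('b \<Rightarrow> 'b \<Rightarrow> bool) \<Rightarrow> 'a set \<Rightarrow> ('a \<Rightarrow> 'a \<Rightarrow> bool) \<Rightarrow> bool" where
  "rainbow_mono_arrow n Q leQ P leP \<longleftrightarrow> (\<forall>c :: nat set \<Rightarrow> nat.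
      (\<exists>f. induced_emb Q leQ (boolean_lattice n) f \<and> inj_on c (f ` Q)) \<or>
      (\<exists>f col. induced_emb P leP (boolean_lattice n) f \<and> (\<forall>x\<in>P. c (f x) = col)))"

lemma RR_eq_Least_rainbow_mono_arrow:
  "RR Q leQ P leP = (LEAST n. rainbow_mono_arrow n Q leQ P leP)"
  unfolding RR_def rainbow_mono_arrow_def ..

lemma induced_emb_mono: "induced_emb A le F f \<Longrightarrow> F \<subseteq> G \<Longrightarrow> induced_emb A le G f"
  unfolding induced_emb_def by blast

lemma lubell_le_Lubell_max:
  assumes "F \<subseteq> boolean_lattice n" "induced_free A le F"
  shows "lubell n F \<le> Lubell_max n A le"
  unfolding Lubell_max_def
proof (rule Max_ge)
  have "{lubell n F |F. F \<subseteq> boolean_lattice n \<and> induced_free A le F} \<subseteq> lubell n ` Pow (boolean_lattice n)"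
    by auto
  then show "finite {lubell n F |F. F \<subseteq> boolean_lattice n \<and> induced_free A le F}"
    by (rule finite_subset) (simp add: boolean_lattice_def)
qed (use assms in blast)

lemma rainbow_V2_of_incomparable:
  assumes "x \<subseteq> {1..n}" "y \<subseteq> {1..n}" "\<not> x \<subseteq> y" "\<not> y \<subseteq> x"
    and "c x \<noteq> c y" "c x \<noteq> c {}" "c y \<noteq> c {}"
  shows "\<exists>f. induced_emb V2_carrier V2_le (boolean_lattice n) f \<and> inj_on c (f ` V2_carrier)"
proof -
  define f where "f i = (if i = 0 then {} else if i = 1 then x else y)" for i :: nat
  have "induced_emb V2_carrier V2_le (boolean_lattice n) f"
    using assms unfolding induced_emb_def V2_carrier_def V2_le_def boolean_lattice_def f_def
    by (auto simp: inj_on_def)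
  moreover have "inj_on c (f ` V2_carrier)"
    using assms unfolding V2_carrier_def f_def by (auto simp: inj_on_def)
  ultimately show ?thesis by blast
qed

lemma induced_V2_card_less:
  assumes "induced_emb V2_carrier V2_le (boolean_lattice m) f" "i \<in> V2_carrier"
  shows "card (f i) < m"
proof -
  have "f j \<subseteq> {1..m}" if "j \<in> V2_carrier" for j
    using assms(1) that by (auto simp: induced_emb_def boolean_lattice_def)
  moreover have "f 0 \<subseteq> f 1" "\<not> f 1 \<subseteq> f 2" "\<not> f 2 \<subseteq> f 1"
    using assms(1) unfolding induced_emb_def V2_carrier_def V2_le_def by auto
  ultimately have "f i \<subset> {1..m}"
    using assms(2) unfolding V2_carrier_def by blast
  then show ?thesis
    using psubset_card_mono[of "{1..m}" "f i"] by simp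
qed

lemma rainbow_mono_arrow_V2_upper:
  assumes "Lubell_max (2 * e + 1) A le \<le> real e"
  shows "rainbow_mono_arrow (2 * e + 1) V2_carrier V2_le A le"
proof -
  let ?n = "2 * e + 1"
  have "\<exists>f col. induced_emb A le (boolean_lattice ?n) f \<and> (\<forall>x\<in>A. c (f x) = col)"
    if no_rainbow: "\<nexists>f. induced_emb V2_carrier V2_le (boolean_lattice ?n) f \<and> inj_on c (f ` V2_carrier)"
    for c :: "nat set \<Rightarrow> nat"
  proof -
    have "c x = c y \<or> c x = c {} \<or> c y = c {}"
      if "x \<subseteq> {1..?n}" "y \<subseteq> {1..?n}" "\<not> x \<subseteq> y" "\<not> y \<subseteq> x" for x y
      using rainbow_V2_of_incomparable[OF that, of c] no_rainbow by blast
    then obtain col where col: "real ?n - 1 < 2 * lubell ?n {X. X \<subseteq> {1..?n} \<and> c X = col}"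
      using no_rainbow_V2_large_colour_class by blast
    let ?F = "{X. X \<subseteq> {1..?n} \<and> c X = col}"
    have F: "?F \<subseteq> boolean_lattice ?n"
      by (auto simp: boolean_lattice_def)
    have "\<not> induced_free A le ?F"
      using lubell_le_Lubell_max[OF F] assms col by force
    then obtain f where f: "induced_emb A le ?F f"
      by (auto simp: induced_free_def)
    have "induced_emb A le (boolean_lattice ?n) f"
      using f F by (rule induced_emb_mono)
    moreover have "\<forall>x\<in>A. c (f x) = col"
      using f by (auto simp: induced_emb_def)
    ultimately show ?thesis by blast
  qed
  then show ?thesis
    unfolding rainbow_mono_arrow_def by blast
qed

lemma not_rainbow_mono_arrow_V2_below:
  assumes free: "\<And>n k. induced_free A le (consec_levels n k e)"
    and "a \<in> A" "b \<in> A" "a \<noteq> b" and "m \<le> 2 * e"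
  shows "\<not> rainbow_mono_arrow m V2_carrier V2_le A le"
proof -
  define c where "c X = (if card X < e then 0 else if card X < 2 * e then 1 else 2 :: nat)"
    for X :: "nat set"
  have no_rainbow: "\<not> inj_on c (f ` V2_carrier)"
    if f: "induced_emb V2_carrier V2_le (boolean_lattice m) f" for f
  proof
    assume inj: "inj_on c (f ` V2_carrier)"
    have "card (f i) < 2 * e" if "i \<in> V2_carrier" for i
      using induced_V2_card_less[OF f that] assms(5) by linarith
    then have "c ` f ` V2_carrier \<subseteq> {0, 1}"
      by (auto simp: c_def)
    then have "card (c ` f ` V2_carrier) \<le> 2"
      using card_mono[of "{0, 1 :: nat}" "c ` f ` V2_carrier"] by simp
    moreover have "card (c ` f ` V2_carrier) = 3"
      using inj f by (simp add: card_image induced_emb_def V2_carrier_def)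
    ultimately show False by simp
  qed
  have no_mono: "\<not> (\<forall>x\<in>A. c (f x) = col)"
    if f: "induced_emb A le (boolean_lattice m) f" for f col
  proof
    assume mono: "\<forall>x\<in>A. c (f x) = col"
    have sub: "f x \<subseteq> {1..m}" if "x \<in> A" for x
      using f that by (auto simp: induced_emb_def boolean_lattice_def)
    show False
    proof (cases "col < 2")
      case True
      then have "col = 0 \<or> col = 1" by auto
      then have "f ` A \<subseteq> consec_levels m (col * e) e"
        using sub mono by (auto simp: consec_levels_def c_def split: if_splits)
      then have "induced_emb A le (consec_levels m (col * e) e) f"
        using f by (auto simp: induced_emb_def)
      then show False
        using free by (auto simp: induced_free_def)
    next
      case False
      have "f x = {1..m}" if "x \<in> A" for x
      proof (rule card_seteq)
        show "card {1..m} \<le> card (f x)"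
          using mono that False assms(5) by (auto simp: c_def split: if_splits)
      qed (use sub that in auto)
      then have "f a = f b" using assms(2,3) by simp
      then show False
        using f assms(2-4) by (auto simp: induced_emb_def inj_on_def)
    qed
  qed
  show ?thesis
    unfolding rainbow_mono_arrow_def using no_rainbow no_mono by blast
qed

lemma induced_emb_down_sets:
  "\<exists>f. induced_emb (UNIV :: 'a :: {finite, order} set) (\<le>) (boolean_lattice (card (UNIV :: 'a set))) f"
proof -
  let ?N = "card (UNIV :: 'a set)"
  obtain h where "bij_betw h {1..?N} (UNIV :: 'a set)"
    using ex_bij_betw_nat_finite_1[OF finite_UNIV] by blast
  then obtain g :: "'a \<Rightarrow> nat" where g: "bij_betw g UNIV {1..?N}"
    using bij_betw_inv_into by blast
  define f where "f x = g ` {y. y \<le> x}" for x :: 'a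
  have mem: "g x \<in> f y \<longleftrightarrow> x \<le> y" for x y
    using bij_betw_imp_inj_on[OF g] unfolding f_def by (auto dest: injD)
  have sub_iff: "f x \<subseteq> f y \<longleftrightarrow> x \<le> y" for x y
  proof
    assume "f x \<subseteq> f y"
    then show "x \<le> y" using mem[of x x] mem[of x y] by blast
  next
    assume "x \<le> y"
    then show "f x \<subseteq> f y" unfolding f_def by auto
  qed
  have "inj f"
    by (rule injI) (metis sub_iff antisym order_refl)
  moreover have "range f \<subseteq> boolean_lattice ?N"
    using bij_betw_imp_surj_on[OF g] unfolding f_def boolean_lattice_def by auto
  ultimately show ?thesis
    unfolding induced_emb_def using sub_iff by blast
qed

lemma induced_free_consec_levels_e_num:
  "induced_free (UNIV :: 'a :: {finite, order} set) (\<le>) (consec_levels n k (e_num (UNIV :: 'a set) (\<le>)))"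
proof -
  let ?N = "card (UNIV :: 'a set)"
  let ?Q = "\<lambda>m. \<forall>n k. induced_free (UNIV :: 'a set) (\<le>) (consec_levels n k m)"
  have "consec_levels n k 0 = {}" for n k
    by (auto simp: consec_levels_def)
  then have "?Q 0"
    unfolding induced_free_def induced_emb_def by auto
  moreover have "m \<le> ?N" if "?Q m" for m
  proof (rule ccontr)
    assume "\<not> m \<le> ?N"
    then have "card X < m" if "X \<subseteq> {1..?N}" for X
      using card_mono[OF _ that] by simp
    then have "boolean_lattice ?N \<subseteq> consec_levels ?N 0 m"
      by (auto simp: boolean_lattice_def consec_levels_def)
    moreover obtain f where "induced_emb (UNIV :: 'a set) (\<le>) (boolean_lattice ?N) f"
      using induced_emb_down_sets by blast
    ultimately have "induced_emb (UNIV :: 'a set) (\<le>) (consec_levels ?N 0 m) f"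
      using induced_emb_mono by blast
    then show False
      using that unfolding induced_free_def by blast
  qed
  ultimately have "?Q (Greatest ?Q)"
    by (rule GreatestI_nat)
  then show ?thesis
    unfolding e_num_def by blast
qed

theorem theorem1p7:
  assumes "uniformly_induced_Lubell_bounded (UNIV :: 'a :: {finite, order} set) (\<le>)"
    and "card (UNIV :: 'a set) \<noteq> 1"
  shows "RR V2_carrier V2_le (UNIV :: 'a set) (\<le>) = 2 * e_num (UNIV :: 'a set) (\<le>) + 1"
proof -
  define e where "e = e_num (UNIV :: 'a set) (\<le>)"
  obtain a b :: 'a where "a \<noteq> b"
    using assms(2) by (metis UNIV_eq_I card_1_singleton_iff One_nat_def singletonI)
  have "rainbow_mono_arrow (2 * e + 1) V2_carrier V2_le (UNIV :: 'a set) (\<le>)"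
    using assms(1) by (intro rainbow_mono_arrow_V2_upper) (simp add: uniformly_induced_Lubell_bounded_def e_def)
  moreover have "2 * e + 1 \<le> m" if "rainbow_mono_arrow m V2_carrier V2_le (UNIV :: 'a set) (\<le>)" for m
  proof (rule ccontr)
    assume "\<not> 2 * e + 1 \<le> m"
    then show False
      using not_rainbow_mono_arrow_V2_below[OF induced_free_consec_levels_e_num _ _ \<open>a \<noteq> b\<close>, of m] that
      by (simp add: e_def)
  qed
  ultimately show ?thesis
    unfolding RR_eq_Least_rainbow_mono_arrow e_def[symmetric] by (rule Least_equality)
qed

end
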